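(* Let $b\ge 2$ with $b\not\equiv 1\pmod 3$, and let $n\ge 2$. Then $$\mathrm{Ap}(T_{b'}(n),s'_0)=\Big\{\sum_{i=1}^{n+1} t_i s'_i : (t_1,\dots,t_{n+1})\in R_{b'}(n)\Big\}.$$
   Context: For integers $b\ge2$ with $b\not\equiv1\pmod3$, $n\ge0$, $i\ge0$ put $s'_i=(b+1)b^{n+i}+1$, and $T_{b'}(n)=\langle\{s'_i:i\in\mathbb{N}\}\rangle$ (submonoid of $(\mathbb{N},+)$ generated by them). For a numerical semigroup $S$ and $x\in S\setminus\{0\}$, $\mathrm{Ap}(S,x)=\{s\in S:s-x\notin S\}$. $R_{b'}(n)$ is the set of $(t_1,\dots,t_{n+1})\in\{0,1,\dots,b\}^{n+1}$ such that: (i) if $t_i=b$ then $t_j=0$ for all $1\le j<i$; (ii) $t_{n+1}\le b-1$; (iii) if $t_{n+1}=b-1$ then $t_n\le b-1$, and if $(t_n,t_{n+1})=(b-1,b-1)$ then $t_1\le 2$ and $t_i=0$ for all $i\notin\{1,n,n+1\}$. *)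

theory Defs
  imports Main
begin

definition sgen :: "nat \<Rightarrow> nat \<Rightarrow> nat \<Rightarrow> nat" where
  "sgen b n i = (b + 1) * b ^ (n + i) + 1"

inductive_set submonoid_gen :: "nat set \<Rightarrow> nat set" for A :: "nat set" where
  zero: "0 \<in> submonoid_gen A"
| add: "a \<in> A \<Longrightarrow> x \<in> submonoid_gen A \<Longrightarrow> a + x \<in> submonoid_gen A"

definition T_b' :: "nat \<Rightarrow> nat \<Rightarrow> nat set" where
  "T_b' b n = submonoid_gen (range (sgen b n))"

text \<open>Apery set Ap(S,x) = {s in S. s - x notin S} (integer subtraction).\<close>
definition Apery :: "nat set \<Rightarrow> nat \<Rightarrow> nat set" where
  "Apery S x = {s \<in> S. \<not> (s \<ge> x \<and> s - x \<in> S)}"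

text \<open>R_{b'}(n): tuples (t_1..t_{n+1}) represented as functions nat => nat,
  with t j = 0 for j outside {1..n+1}.\<close>
definition R_b' :: "nat \<Rightarrow> nat \<Rightarrow> (nat \<Rightarrow> nat) set" where
  "R_b' b n = {t. (\<forall>j. (j < 1 \<or> j > n + 1) \<longrightarrow> t j = 0)
     \<and> (\<forall>j\<in>{1..n+1}. t j \<le> b)
     \<and> (\<forall>i\<in>{1..n+1}. t i = b \<longrightarrow> (\<forall>j. 1 \<le> j \<and> j < i \<longrightarrow> t j = 0))
     \<and> t (n + 1) \<le> b - 1
     \<and> (t (n + 1) = b - 1 \<longrightarrow> t n \<le> b - 1)
     \<and> ((t n = b - 1 \<and> t (n + 1) = b - 1) \<longrightarrow>
          (t 1 \<le> 2 \<and> (\<forall>i\<in>{1..n+1}. i \<notin> {1, n, n + 1} \<longrightarrow> t i = 0)))}"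

end

theory Submission
  imports Defs
begin

text \<open>
  Every element of \<open>T_b'(n)\<close> is a combination \<open>\<Sum>\<^sub>i\<^sub>\<le>\<^sub>n\<^sub>+\<^sub>1 u\<^sub>i s'\<^sub>i\<close>: from
  \<open>b s'\<^sub>i = s'\<^sub>i\<^sub>+\<^sub>1 + (b - 1)\<close>, every larger generator is a combination of \<open>s'\<^sub>0\<close> and \<open>s'\<^sub>1\<close>.
  A handful of exchange rules, each replacing part of such a combination by one of smaller value
  plus a multiple of \<open>s'\<^sub>0\<close> (or of equal value and smaller index-weighted size), terminate, and a
  coefficient vector to which none applies lies in \<open>R_b'(n)\<close>. Hence every element of \<open>T_b'(n)\<close>
  is \<open>\<Sum> t\<^sub>i s'\<^sub>i + k s'\<^sub>0\<close> with \<open>t \<in> R_b'(n)\<close>.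

  Conversely \<open>s'\<^sub>i + (b - 1) E\<^sub>i = s'\<^sub>0 b\<^sup>i\<close> with the repunit \<open>E\<^sub>i = 1 + b + \<dots> + b\<^sup>i\<^sup>-\<^sup>1\<close>, so
  \<open>\<Sum> t\<^sub>i s'\<^sub>i \<equiv> -(b - 1) \<Sum> t\<^sub>i E\<^sub>i\<close> modulo \<open>s'\<^sub>0\<close>. For \<open>t \<in> R_b'(n)\<close> the sum \<open>\<Sum> t\<^sub>i E\<^sub>i\<close> is a greedy
  expansion in the repunit basis, hence determines \<open>t\<close>, and it is smaller than \<open>s'\<^sub>0\<close>. As
  \<open>s'\<^sub>0 \<equiv> 3\<close> modulo \<open>b - 1\<close>, the hypothesis \<open>b mod 3 \<noteq> 1\<close> makes \<open>s'\<^sub>0\<close> coprime to \<open>b - 1\<close>, so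
  distinct elements of \<open>R_b'(n)\<close> give distinct residues. A set of elements of \<open>T_b'(n)\<close> meeting
  every residue class exactly once, from which all of \<open>T_b'(n)\<close> is reached by adding \<open>s'\<^sub>0\<close>,
  is the Apery set.
\<close>

section \<open>Weighted coefficient sums\<close>

definition wsum :: "nat \<Rightarrow> (nat \<Rightarrow> nat) \<Rightarrow> (nat \<Rightarrow> nat) \<Rightarrow> nat" where
  "wsum N w u = (\<Sum>i\<le>N. u i * w i)"

lemma wsum_update:
  assumes "p \<le> N"
  shows "wsum N w (u(p := a)) + u p * w p = wsum N w u + a * w p"
proof -
  have p: "p \<in> {..N}" using assms by simp
  have "(\<Sum>i\<in>{..N} - {p}. (u(p := a)) i * w i) = (\<Sum>i\<in>{..N} - {p}. u i * w i)"
    by (rule sum.cong) auto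
  then show ?thesis
    unfolding wsum_def sum.remove[OF finite_atMost p] by simp
qed

lemma wsum_update_minus:
  "p \<le> N \<Longrightarrow> d \<le> u p \<Longrightarrow> wsum N w (u(p := u p - d)) + d * w p = wsum N w u"
proof -
  assume "p \<le> N" "d \<le> u p"
  moreover have "(u p - d) * w p + d * w p = u p * w p"
    using \<open>d \<le> u p\<close> by (simp add: add_mult_distrib[symmetric])
  ultimately show ?thesis using wsum_update[of p N w u "u p - d"] by linarith
qed

lemma wsum_update_plus: "p \<le> N \<Longrightarrow> wsum N w (u(p := u p + d)) = wsum N w u + d * w p"
  using wsum_update[of p N w u "u p + d"] by (simp add: add_mult_distrib)

lemma wsum_zero [simp]: "wsum N w (\<lambda>_. 0) = 0"
  by (simp add: wsum_def)

lemma wsum_single: "p \<le> N \<Longrightarrow> wsum N w ((\<lambda>_. 0)(p := 1)) = w p"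
  using wsum_update[of p N w "\<lambda>_. 0" 1] by simp

lemma wsum_add: "wsum N w (\<lambda>i. u i + v i) = wsum N w u + wsum N w v"
  by (simp add: wsum_def add_mult_distrib sum.distrib)

lemma wsum_scale: "wsum N w (\<lambda>i. k * u i) = k * wsum N w u"
  by (simp add: wsum_def sum_distrib_left mult.assoc)

lemma wsum_add_weights: "wsum N (\<lambda>i. w i + w' i) u = wsum N w u + wsum N w' u"
  by (simp add: wsum_def add_mult_distrib2 sum.distrib)

lemma wsum_scale_weights: "wsum N (\<lambda>i. k * w i) u = k * wsum N w u"
  by (simp add: wsum_def sum_distrib_left ac_simps)

lemma wsum_cong: "(\<And>i. i \<le> N \<Longrightarrow> u i = v i) \<Longrightarrow> wsum N w u = wsum N w v"
  by (simp add: wsum_def)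

lemma wsum_eq_sum_from_1: "u 0 * w 0 = 0 \<Longrightarrow> wsum N w u = (\<Sum>i = 1..N. u i * w i)"
  unfolding wsum_def atMost_atLeast0 using sum.atLeast_Suc_atMost[of 0 N "\<lambda>i. u i * w i"] by simp

definition supported :: "nat \<Rightarrow> (nat \<Rightarrow> nat) \<Rightarrow> bool" where
  "supported N u \<longleftrightarrow> (\<forall>j>N. u j = 0)"

lemma supported_update: "supported N u \<Longrightarrow> p \<le> N \<Longrightarrow> supported N (u(p := a))"
  unfolding supported_def by auto

section \<open>Submonoids and Apery sets\<close>

lemma submonoid_gen_add: "x \<in> submonoid_gen A \<Longrightarrow> y \<in> submonoid_gen A \<Longrightarrow> x + y \<in> submonoid_gen A"
  by (induction x rule: submonoid_gen.induct) (auto simp: add.assoc intro: submonoid_gen.add)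

lemma submonoid_gen_mult: "x \<in> submonoid_gen A \<Longrightarrow> k * x \<in> submonoid_gen A"
  by (induction k) (auto intro: submonoid_gen_add submonoid_gen.zero)

lemma submonoid_gen_generator: "a \<in> A \<Longrightarrow> a \<in> submonoid_gen A"
  using submonoid_gen.add[of a A 0] submonoid_gen.zero by simp

lemma wsum_in_submonoid_gen: "range w \<subseteq> A \<Longrightarrow> wsum N w u \<in> submonoid_gen A"
proof (induction N)
  case 0
  then show ?case by (auto simp: wsum_def intro: submonoid_gen_mult submonoid_gen_generator)
next
  case (Suc N)
  then have "u (Suc N) * w (Suc N) \<in> submonoid_gen A"
    by (auto intro: submonoid_gen_mult submonoid_gen_generator)
  with Suc show ?case by (simp add: wsum_def submonoid_gen_add)
qed

lemma Apery_eq_residue_system: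
  fixes S A :: "nat set"
  assumes "0 < m"
    and add_m: "\<And>x. x \<in> S \<Longrightarrow> x + m \<in> S"
    and "A \<subseteq> S"
    and decompose: "\<And>x. x \<in> S \<Longrightarrow> \<exists>a\<in>A. \<exists>k. x = a + k * m"
    and incongruent: "\<And>a a'. a \<in> A \<Longrightarrow> a' \<in> A \<Longrightarrow> a mod m = a' mod m \<Longrightarrow> a = a'"
  shows "Apery S m = A"
proof (intro equalityI subsetI)
  have multiples: "a + k * m \<in> S" if "a \<in> A" for a k
  proof (induction k)
    case (Suc k)
    then show ?case using add_m[OF Suc.IH] by (simp add: ac_simps)
  qed (use that \<open>A \<subseteq> S\<close> in auto)
  fix x assume "x \<in> Apery S m"
  then have "x \<in> S" and minimal: "\<not> (m \<le> x \<and> x - m \<in> S)" unfolding Apery_def by auto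
  then obtain a k where "a \<in> A" "x = a + k * m" using decompose by blast
  moreover have "k = 0"
  proof (rule ccontr)
    assume "k \<noteq> 0"
    then obtain k' where "k = Suc k'" using not0_implies_Suc by blast
    then show False using minimal multiples[OF \<open>a \<in> A\<close>, of k'] \<open>x = a + k * m\<close> by simp
  qed
  ultimately show "x \<in> A" by simp
next
  fix a assume "a \<in> A"
  have "\<not> (m \<le> a \<and> a - m \<in> S)"
  proof
    assume "m \<le> a \<and> a - m \<in> S"
    then obtain a' k where "a' \<in> A" "a - m = a' + k * m" using decompose by blast
    then have "a = a' + Suc k * m" using \<open>m \<le> a \<and> a - m \<in> S\<close> by auto
    then have "a mod m = a' mod m" by (metis mod_mult_self1)
    then have "a = a'" using incongruent \<open>a \<in> A\<close> \<open>a' \<in> A\<close> by blast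
    with \<open>a = a' + Suc k * m\<close> \<open>0 < m\<close> show False by simp
  qed
  then show "a \<in> Apery S m" using \<open>a \<in> A\<close> \<open>A \<subseteq> S\<close> unfolding Apery_def by auto
qed

section \<open>Repunits and greedy digit expansions\<close>

fun repunit :: "nat \<Rightarrow> nat \<Rightarrow> nat" where
  "repunit b 0 = 0"
| "repunit b (Suc k) = b * repunit b k + 1"

lemma repunit_geometric: "1 \<le> b \<Longrightarrow> (b - 1) * repunit b k + 1 = b ^ k"
proof (induction k)
  case (Suc k)
  then obtain a where "b = Suc a" by (cases b) auto
  then have "(b - 1) * repunit b (Suc k) + 1 = b * ((b - 1) * repunit b k + 1)"
    by (simp add: algebra_simps)
  with Suc show ?case by simp
qed simp

lemma repunit_ge:
  assumes "1 \<le> b" "2 \<le> k"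
  shows "b + 1 \<le> repunit b k"
  using \<open>2 \<le> k\<close>
proof (induction k rule: dec_induct)
  case (step k)
  then have "repunit b k \<le> b * repunit b k" using assms(1) by simp
  with step show ?case by simp
qed (simp add: numeral_2_eq_2)

definition repunit_digits :: "nat \<Rightarrow> nat \<Rightarrow> (nat \<Rightarrow> nat) \<Rightarrow> bool" where
  "repunit_digits b N t \<longleftrightarrow>
     (\<forall>i\<in>{1..N}. t i \<le> b \<and> (t i = b \<longrightarrow> (\<forall>j. 1 \<le> j \<and> j < i \<longrightarrow> t j = 0)))"

lemma repunit_digits_sum_less:
  assumes "1 \<le> b" "repunit_digits b N t" "k \<le> N"
  shows "(\<Sum>i = 1..k. t i * repunit b i) < repunit b (Suc k)"
  using \<open>k \<le> N\<close>
proof (induction k)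
  case (Suc k)
  have digit: "t (Suc k) \<le> b" "t (Suc k) = b \<Longrightarrow> \<forall>j. 1 \<le> j \<and> j < Suc k \<longrightarrow> t j = 0"
    using assms(2) Suc.prems unfolding repunit_digits_def by auto
  show ?case
  proof (cases "t (Suc k) = b")
    case True
    then have "(\<Sum>i = 1..k. t i * repunit b i) = 0" using digit(2) by (intro sum.neutral) auto
    with True show ?thesis by simp
  next
    case False
    then have "t (Suc k) * repunit b (Suc k) + repunit b (Suc k) \<le> b * repunit b (Suc k)"
      using digit(1) by (metis add.commute le_less_Suc_eq linorder_not_le mult_Suc mult_le_mono1)
    with Suc show ?thesis by simp
  qed
qed simp

lemma repunit_digits_unique:
  assumes "1 \<le> b" "repunit_digits b N t" "repunit_digits b N t'" "k \<le> N"
    and "(\<Sum>i = 1..k. t i * repunit b i) = (\<Sum>i = 1..k. t' i * repunit b i)"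
  shows "\<forall>i\<in>{1..k}. t i = t' i"
  using assms(4,5)
proof (induction k)
  case (Suc k)
  define A where "A = (\<Sum>i = 1..k. t i * repunit b i)"
  define A' where "A' = (\<Sum>i = 1..k. t' i * repunit b i)"
  have "A < repunit b (Suc k)" "A' < repunit b (Suc k)"
    using repunit_digits_sum_less[OF assms(1)] assms(2,3) Suc.prems unfolding A_def A'_def by auto
  then have "(A + t (Suc k) * repunit b (Suc k)) div repunit b (Suc k) = t (Suc k)"
    "(A' + t' (Suc k) * repunit b (Suc k)) div repunit b (Suc k) = t' (Suc k)"
    by (simp_all del: repunit.simps)
  moreover have split: "A + t (Suc k) * repunit b (Suc k) = A' + t' (Suc k) * repunit b (Suc k)"
    using Suc.prems(2) unfolding A_def A'_def by simp
  ultimately have top: "t (Suc k) = t' (Suc k)" by metis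
  with split have "A = A'" by simp
  with Suc top show ?case unfolding A_def A'_def by (auto simp: le_Suc_eq)
qed simp

section \<open>The generators\<close>

lemma sgen_mult_base: "1 \<le> b \<Longrightarrow> b * sgen b n i = sgen b n (Suc i) + (b - 1)"
  unfolding sgen_def by (simp add: algebra_simps)

lemma sgen_pos: "0 < sgen b n i"
  by (simp add: sgen_def)

lemma sgen_repunit: "1 \<le> b \<Longrightarrow> sgen b n i + (b - 1) * repunit b i = sgen b n 0 * b ^ i"
proof -
  assume "1 \<le> b"
  have "sgen b n 0 * b ^ i = (b + 1) * b ^ (n + i) + b ^ i"
    by (simp add: sgen_def power_add algebra_simps)
  also have "\<dots> = sgen b n i + (b - 1) * repunit b i"
    using repunit_geometric[OF \<open>1 \<le> b\<close>, of i] by (simp add: sgen_def)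
  finally show ?thesis by simp
qed

lemma sgen_0_eq_pred_mult: "1 \<le> b \<Longrightarrow> sgen b n 0 = (b - 1) * ((b + 1) * repunit b n + 1) + 3"
proof -
  assume "1 \<le> b"
  then obtain a where a: "b = Suc a" by (cases b) auto
  have "Suc a ^ n = a * repunit b n + 1"
    using repunit_geometric[OF \<open>1 \<le> b\<close>, of n] a by simp
  then show ?thesis unfolding sgen_def a by (simp add: algebra_simps)
qed

lemma coprime_sgen_0_pred:
  assumes "2 \<le> b" "b mod 3 \<noteq> 1"
  shows "coprime (sgen b n 0) (b - 1)"
proof (rule coprimeI)
  fix c assume c: "c dvd sgen b n 0" "c dvd b - 1"
  have "sgen b n 0 = (b - 1) * ((b + 1) * repunit b n + 1) + 3"
    using sgen_0_eq_pred_mult[of b n] assms(1) by simp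
  with c have "c dvd 3" by (metis dvd_add_right_iff dvd_mult2)
  moreover have "c \<noteq> 3"
  proof
    assume "c = 3"
    then obtain k where "b - 1 = 3 * k" using c(2) by blast
    then have "b = 3 * k + 1" using assms(1) by simp
    then show False using assms(2) by simp
  qed
  moreover have "c \<le> 3" using \<open>c dvd 3\<close> by (rule dvd_imp_le) simp
  moreover have "c \<noteq> 0" using \<open>c dvd 3\<close> by (metis dvd_0_left_iff zero_neq_numeral)
  moreover have "c \<noteq> 2" using \<open>c dvd 3\<close> by auto
  ultimately show "is_unit c" by simp
qed

lemma R_b'_coeff_0:
  assumes "t \<in> R_b' b n"
  shows "t 0 = 0"
proof -
  have "\<forall>j. (j < 1 \<or> j > n + 1) \<longrightarrow> t j = 0"
    using assms unfolding R_b'_def mem_Collect_eq by (rule conjunct1)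
  then show ?thesis by simp
qed

lemma R_b'_repunit_digits: "t \<in> R_b' b n \<Longrightarrow> repunit_digits b (n + 1) t"
  unfolding R_b'_def repunit_digits_def by blast

lemma wsum_sgen_repunit:
  assumes "1 \<le> b"
  shows "wsum N (sgen b n) u + (b - 1) * wsum N (repunit b) u = sgen b n 0 * wsum N (power b) u"
proof -
  have "wsum N (sgen b n) u + (b - 1) * wsum N (repunit b) u =
      wsum N (\<lambda>i. sgen b n i + (b - 1) * repunit b i) u"
    by (simp only: wsum_add_weights wsum_scale_weights)
  also have "(\<lambda>i. sgen b n i + (b - 1) * repunit b i) = (\<lambda>i. sgen b n 0 * b ^ i)"
    by (rule ext) (rule sgen_repunit[OF assms])
  also have "wsum N (\<lambda>i. sgen b n 0 * b ^ i) u = sgen b n 0 * wsum N (power b) u"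
    by (rule wsum_scale_weights)
  finally show ?thesis .
qed

lemma R_b'_top_cases:
  assumes t: "t \<in> R_b' b n" and "2 \<le> n"
  obtains (low) "t (n + 1) < b - 1"
    | (mid) "t (n + 1) = b - 1" "t n < b - 1"
    | (top) "t (n + 1) = b - 1" "t n = b - 1" "t 1 \<le> 2" "\<forall>i\<in>{2..n - 1}. t i = 0"
proof -
  have R: "t (n + 1) \<le> b - 1" "t (n + 1) = b - 1 \<longrightarrow> t n \<le> b - 1"
    "t n = b - 1 \<and> t (n + 1) = b - 1 \<longrightarrow> t 1 \<le> 2 \<and> (\<forall>i\<in>{1..n + 1}. i \<notin> {1, n, n + 1} \<longrightarrow> t i = 0)"
    using t unfolding R_b'_def by blast+
  show thesis
  proof (cases "t (n + 1) < b - 1")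
    case True
    then show thesis by (rule low)
  next
    case False
    then have tn1: "t (n + 1) = b - 1" using R(1) by simp
    show thesis
    proof (cases "t n < b - 1")
      case True
      with tn1 show thesis by (rule mid)
    next
      case False
      then have tn: "t n = b - 1" using R(2) tn1 by simp
      have "t 1 \<le> 2" and zero: "\<forall>i\<in>{1..n + 1}. i \<notin> {1, n, n + 1} \<longrightarrow> t i = 0"
        using R(3) tn tn1 by blast+
      have "\<forall>i\<in>{2..n - 1}. t i = 0"
      proof
        fix i assume "i \<in> {2..n - 1}"
        then have "i \<in> {1..n + 1}" "i \<notin> {1, n, n + 1}" using \<open>2 \<le> n\<close> by auto
        then show "t i = 0" using zero by blast
      qed
      with tn1 tn \<open>t 1 \<le> 2\<close> show thesis by (rule top)
    qed
  qed
qed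

section \<open>Reduction of coefficient vectors\<close>

definition reducible :: "nat \<Rightarrow> nat \<Rightarrow> (nat \<Rightarrow> nat) \<Rightarrow> bool" where
  "reducible b n u \<longleftrightarrow> (\<exists>u' k. supported (n + 1) u' \<and>
     wsum (n + 1) (sgen b n) u = wsum (n + 1) (sgen b n) u' + k * sgen b n 0 \<and>
     (u', u) \<in> measures [wsum (n + 1) (sgen b n), wsum (n + 1) id])"

context
  fixes b n :: nat
  assumes b2: "2 \<le> b" and n2: "2 \<le> n"
begin

abbreviation (input) s :: "nat \<Rightarrow> nat" where "s \<equiv> sgen b n"
abbreviation (input) sval :: "(nat \<Rightarrow> nat) \<Rightarrow> nat" where "sval \<equiv> wsum (n + 1) (sgen b n)"

lemma sgen_Suc: "b * s i = s (Suc i) + (b - 1)"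
  using sgen_mult_base[of b n i] b2 by simp

lemma repunit_ge_3: "3 \<le> repunit b n"
  using repunit_ge[of b n] b2 n2 by simp

lemma sgen_n_plus_2: "\<exists>X\<ge>2. s (n + 2) = (repunit b n - 1) * s 1 + X * s 0"
proof -
  define P where "P = repunit b n"
  obtain a where a: "b = Suc a" using b2 by (cases b) auto
  have Q: "Suc a ^ n = a * P + 1" using repunit_geometric[of b n] a by (simp add: P_def)
  define X where "X = 2 + (b * b - 1) * b ^ n - P"
  have "P \<le> a * P" using a b2 by simp
  moreover have "b ^ n = a * P + 1" using Q a by simp
  ultimately have "P < b ^ n" by linarith
  moreover have "b ^ n \<le> (b * b - 1) * b ^ n" using b2 a by simp
  ultimately have X: "X + P = 2 + (b * b - 1) * b ^ n" "2 \<le> X"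
    unfolding X_def by linarith+
  have "s (n + 2) + s 1 + P * s 0 = P * s 1 + (2 + (b * b - 1) * b ^ n) * s 0"
    unfolding sgen_def a power_add Q by (simp add: algebra_simps power2_eq_square)
  then have "s (n + 2) + s 1 = P * s 1 + X * s 0"
    unfolding X(1)[symmetric] by (simp add: add_mult_distrib)
  moreover have "P * s 1 = (P - 1) * s 1 + s 1"
    using repunit_ge_3 by (simp add: P_def diff_mult_distrib)
  ultimately show ?thesis using X(2) unfolding P_def by (intro exI[of _ X]) simp
qed

lemma sgen_n_plus_1: "\<exists>X>0. b * s (n + 1) = (repunit b n - 2) * s 1 + X * s 0"
proof -
  obtain X where X: "s (n + 2) = (repunit b n - 1) * s 1 + X * s 0"
    using sgen_n_plus_2 by blast
  have "(repunit b n - 1) * s 1 = (repunit b n - 2) * s 1 + s 1"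
    using repunit_ge_3 by (simp add: diff_mult_distrib)
  moreover have "b * s (n + 1) = s (n + 2) + (b - 1)" "b * s 0 = s 1 + (b - 1)"
    using sgen_Suc[of "n + 1"] sgen_Suc[of 0] by simp_all
  ultimately have "b * s (n + 1) = (repunit b n - 2) * s 1 + (X + b) * s 0"
    using X by (simp add: add_mult_distrib)
  then show ?thesis using b2 by (intro exI[of _ "X + b"]) simp
qed

lemma sgen_n_pair: "\<exists>K>0. (b - 1) * (s n + s (n + 1)) = K * s 0 + 3 * (b - 1)"
proof -
  have "0 < (b + 1) * b ^ n" using b2 by simp
  then obtain d where d: "(b + 1) * b ^ n = Suc d" using gr0_implies_Suc by blast
  have "s n + s (n + 1) = Suc d * Suc d + 2"
    unfolding d[symmetric] by (simp add: sgen_def power_add algebra_simps)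
  also have "\<dots> = d * (Suc d + 1) + 3"
    by (simp add: algebra_simps)
  also have "Suc d + 1 = s 0" unfolding d[symmetric] by (simp add: sgen_def)
  finally have "(b - 1) * (s n + s (n + 1)) = ((b - 1) * d) * s 0 + 3 * (b - 1)"
    by (simp only: add_mult_distrib2 mult.assoc)
  moreover have "0 < d"
  proof -
    have "1 \<le> b ^ n" using b2 by simp
    then have "b + 1 \<le> (b + 1) * b ^ n" by (metis mult.right_neutral mult_le_mono2)
    then show ?thesis using d b2 by linarith
  qed
  ultimately show ?thesis using b2 by (intro exI[of _ "(b - 1) * d"]) simp
qed

lemma sgen_beyond_wsum: "\<exists>u. supported (n + 1) u \<and> 2 \<le> u 0 \<and> s (n + 2 + d) = sval u"
proof (induction d)
  case 0
  obtain X where X: "2 \<le> X" "s (n + 2) = (repunit b n - 1) * s 1 + X * s 0"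
    using sgen_n_plus_2 by blast
  define u :: "nat \<Rightarrow> nat" where "u = (\<lambda>_. 0)(0 := X, 1 := repunit b n - 1)"
  have "sval u = X * s 0 + (repunit b n - 1) * s 1"
    using wsum_update_plus[of 1 "n + 1" s "(\<lambda>_. 0)(0 := X)" "repunit b n - 1"]
      wsum_update_plus[of 0 "n + 1" s "\<lambda>_. 0" X]
    unfolding u_def by simp
  moreover have "supported (n + 1) u" "u 0 = X" unfolding u_def supported_def by simp_all
  ultimately show ?case using X by (intro exI[of _ u]) simp
next
  case (Suc d)
  then obtain u where u: "supported (n + 1) u" "2 \<le> u 0" "s (n + 2 + d) = sval u" by blast
  define v where "v = (\<lambda>i. b * u i)(0 := b * u 0 - b, 1 := b * u 1 + 1)"
  have "b * 2 \<le> b * u 0" using u(2) by simp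
  then have "b \<le> b * u 0 - b" by linarith
  then have "2 \<le> v 0" using b2 by (simp add: v_def)
  have "sval (\<lambda>i. b * u i) = b * s (n + 2 + d)" using u(3) by (simp add: wsum_scale)
  moreover have "sval ((\<lambda>i. b * u i)(0 := b * u 0 - b)) + b * s 0 = sval (\<lambda>i. b * u i)"
    using u(2) by (intro wsum_update_minus) auto
  moreover have "sval v = sval ((\<lambda>i. b * u i)(0 := b * u 0 - b)) + s 1"
    unfolding v_def using wsum_update_plus[of 1 "n + 1" s "(\<lambda>i. b * u i)(0 := b * u 0 - b)" 1]
    by simp
  ultimately have "sval v = s (n + 2 + Suc d)"
    using sgen_Suc[of 0] sgen_Suc[of "n + 2 + d"] by simp
  moreover have "supported (n + 1) v" using u(1) unfolding v_def supported_def by simp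
  ultimately show ?case using \<open>2 \<le> v 0\<close> by metis
qed

lemma sgen_wsum: "\<exists>u. supported (n + 1) u \<and> s j = sval u"
proof (cases "j \<le> n + 1")
  case True
  then show ?thesis using wsum_single[OF True, of s]
    by (intro exI[of _ "(\<lambda>_. 0)(j := 1)"]) (simp add: supported_def)
next
  case False
  then have "j = n + 2 + (j - (n + 2))" by simp
  then show ?thesis using sgen_beyond_wsum[of "j - (n + 2)"] by metis
qed

lemma T_b'_wsum: "x \<in> T_b' b n \<Longrightarrow> \<exists>u. supported (n + 1) u \<and> x = sval u"
  unfolding T_b'_def
proof (induction x rule: submonoid_gen.induct)
  case zero
  then show ?case by (intro exI[of _ "\<lambda>_. 0"]) (simp add: supported_def)
next
  case (add a x)
  then obtain u v where "supported (n + 1) u" "a = sval u" "supported (n + 1) v" "x = sval v"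
    using sgen_wsum by blast
  then show ?case by (intro exI[of _ "\<lambda>i. u i + v i"]) (simp add: supported_def wsum_add)
qed

lemma reducible_by_multiple:
  assumes "supported (n + 1) v" "sval u = sval v + k * s 0" "0 < k"
  shows "reducible b n u"
  using assms sgen_pos[of b n 0] unfolding reducible_def
  by (intro exI[of _ v] exI[of _ k]) auto

lemma reducible_if_coeff_0:
  assumes "supported (n + 1) u" "0 < u 0"
  shows "reducible b n u"
proof (rule reducible_by_multiple)
  show "supported (n + 1) (u(0 := 0))" using assms(1) by (simp add: supported_update)
  show "sval u = sval (u(0 := 0)) + u 0 * s 0" using wsum_update[of 0 "n + 1" s u 0] by simp
qed (use assms in simp)

text \<open>The carry \<open>b s'\<^sub>i + s'\<^sub>j = s'\<^sub>i\<^sub>+\<^sub>1 + b s'\<^sub>j\<^sub>-\<^sub>1\<close> keeps the value and lowers the index weight;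
  \<open>j = i\<close> is allowed when \<open>u\<^sub>i > b\<close>.\<close>
lemma reducible_if_carry:
  assumes u: "supported (n + 1) u" and ij: "1 \<le> j" "j \<le> i" "i \<le> n"
    and "b \<le> u i" "1 \<le> (u(i := u i - b)) j"
  shows "reducible b n u"
proof -
  define u1 where "u1 = u(i := u i - b)"
  define u2 where "u2 = u1(j := u1 j - 1)"
  define u3 where "u3 = u2(Suc i := u2 (Suc i) + 1)"
  define v where "v = u3(j - 1 := u3 (j - 1) + b)"
  have "wsum (n + 1) w v + b * w i + w j = wsum (n + 1) w u + w (Suc i) + b * w (j - 1)" for w
  proof -
    have "wsum (n + 1) w u1 + b * w i = wsum (n + 1) w u"
      unfolding u1_def using assms by (intro wsum_update_minus) auto
    moreover have "wsum (n + 1) w u2 + 1 * w j = wsum (n + 1) w u1"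
      unfolding u2_def using assms by (intro wsum_update_minus) (auto simp: u1_def)
    moreover have "wsum (n + 1) w u3 = wsum (n + 1) w u2 + 1 * w (Suc i)"
      unfolding u3_def using ij by (intro wsum_update_plus) auto
    moreover have "wsum (n + 1) w v = wsum (n + 1) w u3 + b * w (j - 1)"
      unfolding v_def using ij by (intro wsum_update_plus) auto
    ultimately show ?thesis by simp
  qed
  note shift = this
  have "b * s i + s j = s (Suc i) + b * s (j - 1)"
    using sgen_Suc[of i] sgen_Suc[of "j - 1"] ij by simp
  then have "sval v = sval u" using shift[of s] by linarith
  moreover have "Suc i + b * (j - 1) < b * i + j"
  proof -
    obtain d where d: "i = (j - 1) + d" "1 \<le> d" using ij by (intro that[of "i - (j - 1)"]) auto
    then have "b * i = b * (j - 1) + b * d" by (simp add: add_mult_distrib2)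
    moreover have "2 * d \<le> b * d" using b2 by simp
    ultimately show ?thesis using ij d by linarith
  qed
  then have "wsum (n + 1) id v < wsum (n + 1) id u" using shift[of id] by simp
  moreover have "supported (n + 1) v" using u ij unfolding v_def u3_def u2_def u1_def supported_def by auto
  ultimately show ?thesis unfolding reducible_def by (intro exI[of _ v] exI[of _ 0]) simp
qed

lemma reducible_if_last_ge:
  assumes u: "supported (n + 1) u" and "b \<le> u (n + 1)"
  shows "reducible b n u"
proof -
  obtain X where "0 < X" and X: "b * s (n + 1) = (repunit b n - 2) * s 1 + X * s 0"
    using sgen_n_plus_1 by blast
  define u1 where "u1 = u(n + 1 := u (n + 1) - b)"
  define v where "v = u1(1 := u1 1 + (repunit b n - 2))"
  have "sval u1 + b * s (n + 1) = sval u"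
    unfolding u1_def using assms by (intro wsum_update_minus) auto
  moreover have "sval v = sval u1 + (repunit b n - 2) * s 1"
    unfolding v_def by (intro wsum_update_plus) simp
  ultimately have "sval u = sval v + X * s 0" using X by linarith
  moreover have "supported (n + 1) v" using u unfolding v_def u1_def supported_def by auto
  ultimately show ?thesis using reducible_by_multiple \<open>0 < X\<close> by blast
qed

lemma reducible_if_n_ge:
  assumes u: "supported (n + 1) u" and "b \<le> u n" "b - 1 \<le> u (n + 1)"
  shows "reducible b n u"
proof -
  obtain X where "0 < X" and X: "b * s (n + 1) = (repunit b n - 2) * s 1 + X * s 0"
    using sgen_n_plus_1 by blast
  define u1 where "u1 = u(n := u n - b)"
  define u2 where "u2 = u1(n + 1 := u1 (n + 1) - (b - 1))"
  define v where "v = u2(1 := u2 1 + (repunit b n - 3))"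
  have "sval u1 + b * s n = sval u"
    unfolding u1_def using assms by (intro wsum_update_minus) auto
  moreover have "sval u2 + (b - 1) * s (n + 1) = sval u1"
    unfolding u2_def using assms by (intro wsum_update_minus) (auto simp: u1_def)
  moreover have "sval v = sval u2 + (repunit b n - 3) * s 1"
    unfolding v_def by (intro wsum_update_plus) simp
  moreover have "b * s n + (b - 1) * s (n + 1) = b * s (n + 1) + (b - 1)"
    using sgen_Suc[of n] b2 by (simp add: diff_mult_distrib)
  moreover have "(repunit b n - 2) * s 1 + (b - 1) = (repunit b n - 3) * s 1 + b * s 0"
    using sgen_Suc[of 0] repunit_ge_3 by (simp add: diff_mult_distrib)
  ultimately have "sval u = sval v + (X + b) * s 0" using X by (simp add: add_mult_distrib)
  moreover have "supported (n + 1) v" using u unfolding v_def u2_def u1_def supported_def by auto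
  moreover have "0 < X + b" using \<open>0 < X\<close> by simp
  ultimately show ?thesis using reducible_by_multiple by blast
qed

lemma reduce_top_pair:
  assumes u: "supported (n + 1) u" and "b - 1 \<le> u n" "b - 1 \<le> u (n + 1)"
  shows "\<exists>v K. supported (n + 1) v \<and> 0 < K \<and> sval u = sval v + K * s 0 + 3 * (b - 1) \<and>
    (\<forall>j<n. v j = u j)"
proof -
  obtain K where "0 < K" and K: "(b - 1) * (s n + s (n + 1)) = K * s 0 + 3 * (b - 1)"
    using sgen_n_pair by blast
  define u1 where "u1 = u(n := u n - (b - 1))"
  define v where "v = u1(n + 1 := u1 (n + 1) - (b - 1))"
  have "sval u1 + (b - 1) * s n = sval u"
    unfolding u1_def using assms by (intro wsum_update_minus) auto
  moreover have "sval v + (b - 1) * s (n + 1) = sval u1"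
    unfolding v_def using assms by (intro wsum_update_minus) (auto simp: u1_def)
  moreover have "(b - 1) * (s n + s (n + 1)) = (b - 1) * s n + (b - 1) * s (n + 1)"
    by (rule add_mult_distrib2)
  ultimately have "sval u = sval v + K * s 0 + 3 * (b - 1)" using K by linarith
  moreover have "supported (n + 1) v" using u unfolding v_def u1_def supported_def by auto
  moreover have "\<forall>j<n. v j = u j" unfolding v_def u1_def by simp
  ultimately show ?thesis using \<open>0 < K\<close> by blast
qed

lemma reducible_if_top_pair_coeff_1:
  assumes u: "supported (n + 1) u" and top: "b - 1 \<le> u n" "b - 1 \<le> u (n + 1)" and "3 \<le> u 1"
  shows "reducible b n u"
proof -
  obtain v K where v: "supported (n + 1) v" "0 < K" "sval u = sval v + K * s 0 + 3 * (b - 1)"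
    and agree: "\<forall>j<n. v j = u j"
    using reduce_top_pair[OF u top] by blast
  have "v 1 = u 1" using agree n2 by simp
  define v' where "v' = v(1 := v 1 - 3)"
  have "sval v' + 3 * s 1 = sval v"
    unfolding v'_def using \<open>v 1 = u 1\<close> \<open>3 \<le> u 1\<close> by (intro wsum_update_minus) auto
  moreover have "b * s 0 = s 1 + (b - 1)" using sgen_Suc[of 0] by simp
  moreover have "(K + 3 * b) * s 0 = K * s 0 + 3 * (b * s 0)" by (simp add: algebra_simps)
  ultimately have "sval u = sval v' + (K + 3 * b) * s 0" using v(3) by linarith
  moreover have "supported (n + 1) v'" using v(1) unfolding v'_def supported_def by auto
  ultimately show ?thesis using b2 reducible_by_multiple[of v' u "K + 3 * b"] by simp
qed

lemma reducible_if_top_pair_coeff_2: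
  assumes u: "supported (n + 1) u" and top: "b - 1 \<le> u n" "b - 1 \<le> u (n + 1)"
    and "3 \<le> n" "1 \<le> u 2"
  shows "reducible b n u"
proof -
  obtain v K where v: "supported (n + 1) v" "0 < K" "sval u = sval v + K * s 0 + 3 * (b - 1)"
    and agree: "\<forall>j<n. v j = u j"
    using reduce_top_pair[OF u top] by blast
  have "v 2 = u 2" using agree \<open>3 \<le> n\<close> by simp
  define v1 where "v1 = v(2 := v 2 - 1)"
  define v' where "v' = v1(1 := v1 1 + (b - 2))"
  have "sval v1 + 1 * s 2 = sval v"
    unfolding v1_def using \<open>v 2 = u 2\<close> assms by (intro wsum_update_minus) auto
  moreover have "sval v' = sval v1 + (b - 2) * s 1"
    unfolding v'_def by (intro wsum_update_plus) simp
  moreover have "s 2 + 3 * (b - 1) = (b - 2) * s 1 + 2 * (b * s 0)"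
  proof -
    have "b * s 1 = s 2 + (b - 1)" using sgen_Suc[of 1] by (simp add: numeral_2_eq_2)
    moreover have "(b - 2) * s 1 + 2 * s 1 = b * s 1" using b2 by (simp add: diff_mult_distrib)
    moreover have "b * s 0 = s 1 + (b - 1)" using sgen_Suc[of 0] by simp
    ultimately show ?thesis by linarith
  qed
  moreover have "(K + 2 * b) * s 0 = K * s 0 + 2 * (b * s 0)" by (simp add: algebra_simps)
  ultimately have "sval u = sval v' + (K + 2 * b) * s 0" using v(3) by linarith
  moreover have "supported (n + 1) v'" using v(1) \<open>3 \<le> n\<close> unfolding v'_def v1_def supported_def by auto
  ultimately show ?thesis using b2 reducible_by_multiple[of v' u "K + 2 * b"] by simp
qed

lemma reducible_if_top_pair_coeff_middle:
  assumes u: "supported (n + 1) u" and top: "b - 1 \<le> u n" "b - 1 \<le> u (n + 1)"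
    and i: "3 \<le> i" "i < n" and "1 \<le> u i"
  shows "reducible b n u"
proof -
  obtain v K where v: "supported (n + 1) v" "0 < K" "sval u = sval v + K * s 0 + 3 * (b - 1)"
    and agree: "\<forall>j<n. v j = u j"
    using reduce_top_pair[OF u top] by blast
  have "v i = u i" using agree i by simp
  define v1 where "v1 = v(i := v i - 1)"
  define v2 where "v2 = v1(i - 1 := v1 (i - 1) + (b - 1))"
  define v3 where "v3 = v2(i - 2 := v2 (i - 2) + (b - 1))"
  define v' where "v' = v3(i - 3 := v3 (i - 3) + b)"
  have "sval v1 + 1 * s i = sval v"
    unfolding v1_def using \<open>v i = u i\<close> assms by (intro wsum_update_minus) auto
  moreover have "sval v2 = sval v1 + (b - 1) * s (i - 1)"
    unfolding v2_def using i by (intro wsum_update_plus) auto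
  moreover have "sval v3 = sval v2 + (b - 1) * s (i - 2)"
    unfolding v3_def using i by (intro wsum_update_plus) auto
  moreover have "sval v' = sval v3 + b * s (i - 3)"
    unfolding v'_def using i by (intro wsum_update_plus) auto
  moreover have "s i + 3 * (b - 1) = (b - 1) * s (i - 1) + (b - 1) * s (i - 2) + b * s (i - 3)"
  proof -
    have "Suc (i - 1) = i" "Suc (i - 2) = i - 1" "Suc (i - 3) = i - 2" using i by arith+
    then have "b * s (i - 1) = s i + (b - 1)" "b * s (i - 2) = s (i - 1) + (b - 1)"
      "b * s (i - 3) = s (i - 2) + (b - 1)"
      using sgen_Suc[of "i - 1"] sgen_Suc[of "i - 2"] sgen_Suc[of "i - 3"] by simp_all
    moreover have pred_mult: "(b - 1) * x + x = b * x" for x using b2 by (simp add: diff_mult_distrib)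
    ultimately show ?thesis using pred_mult[of "s (i - 1)"] pred_mult[of "s (i - 2)"] by linarith
  qed
  ultimately have "sval u = sval v' + K * s 0" using v(3) by linarith
  moreover have "supported (n + 1) v'" using v(1) i unfolding v'_def v3_def v2_def v1_def supported_def by auto
  ultimately show ?thesis using reducible_by_multiple[of v' u K] \<open>0 < K\<close> by simp
qed

lemma not_reducible_repunit_digits:
  assumes u: "supported (n + 1) u" and irred: "\<not> reducible b n u"
  shows "repunit_digits b (n + 1) u"
proof -
  have no_carry: "(u(i := u i - b)) j = 0" if "1 \<le> j" "j \<le> i" "i \<le> n" "b \<le> u i" for i j
    using reducible_if_carry[OF u that] irred by (metis One_nat_def Suc_leI neq0_conv)
  have last: "u (n + 1) < b" using reducible_if_last_ge[OF u] irred by (meson not_le)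
  have "u j \<le> b" if "j \<in> {1..n + 1}" for j
  proof (cases "j \<le> n")
    case True
    show ?thesis using no_carry[of j j] True that by (cases "b \<le> u j") auto
  next
    case False
    then have "j = n + 1" using that by simp
    then show ?thesis using last by simp
  qed
  moreover have "u j = 0" if "i \<in> {1..n + 1}" "u i = b" "1 \<le> j" "j < i" for i j
  proof -
    have "i \<le> n" using that last by (cases "i = n + 1") auto
    then show ?thesis using no_carry[of j i] that by simp
  qed
  ultimately show ?thesis unfolding repunit_digits_def by blast
qed

lemma not_reducible_top_pair:
  assumes u: "supported (n + 1) u" and irred: "\<not> reducible b n u"
    and top: "u n = b - 1" "u (n + 1) = b - 1"
  shows "u 1 \<le> 2 \<and> (\<forall>i\<in>{1..n + 1}. i \<notin> {1, n, n + 1} \<longrightarrow> u i = 0)"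
proof (intro conjI ballI impI)
  have pair: "b - 1 \<le> u n" "b - 1 \<le> u (n + 1)" using top by simp_all
  show "u 1 \<le> 2" using reducible_if_top_pair_coeff_1[OF u pair] irred by linarith
  fix i assume "i \<in> {1..n + 1}" "i \<notin> {1, n, n + 1}"
  then have "2 \<le> i" "i < n" by auto
  show "u i = 0"
  proof (cases "i = 2")
    case True
    with \<open>i < n\<close> have "3 \<le> n" by simp
    then have "\<not> 1 \<le> u 2" using reducible_if_top_pair_coeff_2[OF u pair] irred by blast
    with True show ?thesis by simp
  next
    case False
    with \<open>2 \<le> i\<close> have "3 \<le> i" by simp
    then have "\<not> 1 \<le> u i" using reducible_if_top_pair_coeff_middle[OF u pair] irred \<open>i < n\<close> by blast
    then show ?thesis by simp
  qed
qed

lemma not_reducible_in_R_b':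
  assumes u: "supported (n + 1) u" and irred: "\<not> reducible b n u"
  shows "u \<in> R_b' b n"
proof -
  have "u 0 = 0" using reducible_if_coeff_0[OF u] irred by auto
  then have "\<forall>j. (j < 1 \<or> j > n + 1) \<longrightarrow> u j = 0"
    using u unfolding supported_def by (auto simp: less_Suc_eq_0_disj)
  moreover have "u (n + 1) \<le> b - 1" using reducible_if_last_ge[OF u] irred by linarith
  moreover have "u (n + 1) = b - 1 \<longrightarrow> u n \<le> b - 1"
  proof
    assume "u (n + 1) = b - 1"
    then have "\<not> b \<le> u n" using reducible_if_n_ge[OF u] irred by auto
    then show "u n \<le> b - 1" by linarith
  qed
  ultimately show ?thesis
    using not_reducible_repunit_digits[OF u irred] not_reducible_top_pair[OF u irred]
    unfolding R_b'_def repunit_digits_def by blast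
qed

lemma wsum_decomposition:
  "supported (n + 1) u \<Longrightarrow> \<exists>t\<in>R_b' b n. \<exists>k. sval u = sval t + k * s 0"
proof (induction u rule: wf_induct[OF wf_measures[of "[sval, wsum (n + 1) id]"]])
  case (1 u)
  show ?case
  proof (cases "reducible b n u")
    case True
    then obtain v k where v: "supported (n + 1) v" "sval u = sval v + k * s 0"
      "(v, u) \<in> measures [sval, wsum (n + 1) id]"
      unfolding reducible_def by blast
    then obtain t k' where "t \<in> R_b' b n" "sval v = sval t + k' * s 0" using 1 by blast
    with v(2) show ?thesis by (intro bexI[of _ t] exI[of _ "k + k'"]) (auto simp: add_mult_distrib)
  next
    case False
    then show ?thesis using not_reducible_in_R_b' 1(2) by (intro bexI[of _ u] exI[of _ 0]) auto
  qed
qed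

text \<open>
  For \<open>t\<^sub>1 = 2\<close>, \<open>t\<^sub>n = t\<^sub>n\<^sub>+\<^sub>1 = b - 1\<close> and all other digits zero the sum is \<open>s'\<^sub>0 - 1\<close>,
  so the bound \<open>t\<^sub>1 \<le> 2\<close> in \<open>R_b'(n)\<close> is sharp.
\<close>
lemma repunit_wsum_less_sgen_0:
  assumes t: "t \<in> R_b' b n"
  shows "wsum (n + 1) (repunit b) t < s 0"
proof -
  have digits: "repunit_digits b (n + 1) t" using R_b'_repunit_digits[OF t] .
  define L where "L = (\<Sum>i = 1..n - 1. t i * repunit b i)"
  define P where "P = repunit b n"
  define P' where "P' = repunit b (n + 1)"
  have "Suc (n - 1) = n" using n2 by simp
  have lower: "(\<Sum>i = 1..n. t i * repunit b i) = L + t n * P"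
  proof -
    have "(\<Sum>i = 1..Suc (n - 1). t i * repunit b i) = L + t (Suc (n - 1)) * repunit b (Suc (n - 1))"
      unfolding L_def by (simp del: repunit.simps)
    then show ?thesis unfolding P_def \<open>Suc (n - 1) = n\<close> .
  qed
  moreover have "wsum (n + 1) (repunit b) t = (\<Sum>i = 1..n + 1. t i * repunit b i)"
    by (simp add: wsum_eq_sum_from_1)
  ultimately have split: "wsum (n + 1) (repunit b) t = L + t n * P + t (n + 1) * P'"
    unfolding P'_def by (simp del: repunit.simps)
  have L_less: "L < P" using repunit_digits_sum_less[OF _ digits, of "n - 1"] b2 \<open>Suc (n - 1) = n\<close>
    unfolding L_def P_def by simp
  have Ln_less: "L + t n * P < P'" using repunit_digits_sum_less[OF _ digits, of n] b2 lower
    unfolding P'_def by simp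
  have geo: "(b - 1) * P + 1 = b ^ n" "(b - 1) * P' + 1 = b * b ^ n"
    using repunit_geometric[of b n] repunit_geometric[of b "n + 1"] b2 unfolding P_def P'_def by simp_all
  have s0: "s 0 = b * b ^ n + b ^ n + 1" by (simp add: sgen_def algebra_simps)
  from t n2 show ?thesis
  proof (cases rule: R_b'_top_cases)
    case low
    then have "t (n + 1) * P' + P' \<le> (b - 1) * P'"
      using mult_le_mono1[of "t (n + 1) + 1" "b - 1" P'] by simp
    then show ?thesis using split Ln_less geo s0 by linarith
  next
    case mid
    then have "t n * P + P \<le> (b - 1) * P"
      using mult_le_mono1[of "t n + 1" "b - 1" P] by simp
    moreover have "wsum (n + 1) (repunit b) t = L + t n * P + (b - 1) * P'"
      by (simp only: split mid(1))
    ultimately show ?thesis using L_less geo s0 by linarith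
  next
    case top
    have "L = t 1 * repunit b 1 + (\<Sum>i = Suc 1..n - 1. t i * repunit b i)"
      unfolding L_def using n2 by (intro sum.atLeast_Suc_atMost) simp
    moreover have "(\<Sum>i = Suc 1..n - 1. t i * repunit b i) = 0"
      using top(4) by (intro sum.neutral) (simp add: Suc_1)
    ultimately have "L = t 1" by simp
    moreover have "wsum (n + 1) (repunit b) t = L + (b - 1) * P + (b - 1) * P'"
      by (simp only: split top(1,2))
    ultimately show ?thesis using top(3) geo s0 by linarith
  qed
qed

lemma repunit_wsum_eq_if_congruent:
  assumes b3: "b mod 3 \<noteq> 1" and t: "t \<in> R_b' b n" and t': "t' \<in> R_b' b n"
    and cong: "sval t mod s 0 = sval t' mod s 0"
    and le: "wsum (n + 1) (repunit b) t' \<le> wsum (n + 1) (repunit b) t"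
  shows "wsum (n + 1) (repunit b) t = wsum (n + 1) (repunit b) t'"
proof -
  define E where "E = wsum (n + 1) (repunit b) t"
  define E' where "E' = wsum (n + 1) (repunit b) t'"
  have "s 0 dvd sval t + (b - 1) * E" "s 0 dvd sval t' + (b - 1) * E'"
    using wsum_sgen_repunit[of b] b2 unfolding E_def E'_def by (metis dvd_triv_left one_le_numeral order_trans)+
  moreover have "(sval t' + (b - 1) * E) mod s 0 = (sval t + (b - 1) * E) mod s 0"
    using cong by (intro mod_add_cong) simp_all
  ultimately have "s 0 dvd (sval t' + (b - 1) * E) - (sval t' + (b - 1) * E')"
    by (intro dvd_diff_nat) (simp_all add: dvd_eq_mod_eq_0)
  also have "(sval t' + (b - 1) * E) - (sval t' + (b - 1) * E') = (b - 1) * (E - E')"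
    by (simp add: diff_mult_distrib2)
  finally have "s 0 dvd E - E'"
    using coprime_sgen_0_pred[OF b2 b3] by (simp add: coprime_dvd_mult_right_iff)
  moreover have "E - E' < s 0" using repunit_wsum_less_sgen_0[OF t] unfolding E_def by simp
  ultimately have "E - E' = 0" using dvd_imp_le by fastforce
  with le show ?thesis unfolding E_def E'_def by simp
qed

lemma sval_inj_on_R_b'_mod:
  assumes b3: "b mod 3 \<noteq> 1" and t: "t \<in> R_b' b n" and t': "t' \<in> R_b' b n"
    and cong: "sval t mod s 0 = sval t' mod s 0"
  shows "sval t = sval t'"
proof -
  have "wsum (n + 1) (repunit b) t = wsum (n + 1) (repunit b) t'"
    using repunit_wsum_eq_if_congruent[OF b3 t t' cong] repunit_wsum_eq_if_congruent[OF b3 t' t cong[symmetric]]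
    by linarith
  then have "(\<Sum>i = 1..n + 1. t i * repunit b i) = (\<Sum>i = 1..n + 1. t' i * repunit b i)"
    by (simp add: wsum_eq_sum_from_1)
  then have "\<forall>i\<in>{1..n + 1}. t i = t' i"
    using b2 by (intro repunit_digits_unique[OF _ R_b'_repunit_digits[OF t] R_b'_repunit_digits[OF t']]) simp_all
  moreover have "t 0 = t' 0" using R_b'_coeff_0[OF t] R_b'_coeff_0[OF t'] by simp
  ultimately have "t i = t' i" if "i \<le> n + 1" for i using that by (cases "i = 0") auto
  then show ?thesis by (rule wsum_cong)
qed

lemma Apery_T_b'_eq:
  assumes "b mod 3 \<noteq> 1"
  shows "Apery (T_b' b n) (s 0) = sval ` R_b' b n"
proof (rule Apery_eq_residue_system)
  show "0 < s 0" by (rule sgen_pos)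
  show "x + s 0 \<in> T_b' b n" if "x \<in> T_b' b n" for x
    using that submonoid_gen_generator[of "s 0" "range s"] unfolding T_b'_def
    by (simp add: submonoid_gen_add)
  show "sval ` R_b' b n \<subseteq> T_b' b n"
    unfolding T_b'_def by (auto intro: wsum_in_submonoid_gen)
  show "\<exists>a\<in>sval ` R_b' b n. \<exists>k. x = a + k * s 0" if "x \<in> T_b' b n" for x
    using T_b'_wsum[OF that] wsum_decomposition by blast
  show "a = a'" if "a \<in> sval ` R_b' b n" "a' \<in> sval ` R_b' b n" "a mod s 0 = a' mod s 0" for a a'
    using that sval_inj_on_R_b'_mod[OF assms] by blast
qed

end

theorem mainTheorem12:
  fixes b n :: nat
  assumes "b \<ge> 2" and "b mod 3 \<noteq> 1" and "n \<ge> 2"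
  shows "Apery (T_b' b n) (sgen b n 0) =
         {(\<Sum>i = 1..n+1. t i * sgen b n i) | t. t \<in> R_b' b n}"
proof -
  have "(\<Sum>i = 1..n + 1. t i * sgen b n i) = wsum (n + 1) (sgen b n) t" if "t \<in> R_b' b n" for t
    using wsum_eq_sum_from_1[of t] R_b'_coeff_0[OF that] by simp
  then have "{(\<Sum>i = 1..n + 1. t i * sgen b n i) | t. t \<in> R_b' b n} = wsum (n + 1) (sgen b n) ` R_b' b n"
    unfolding setcompr_eq_image Collect_mem_eq by (rule image_cong[OF refl])
  with Apery_T_b'_eq[OF assms(1,3,2)] show ?thesis by simp
qed

end
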